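(* Let $G$ be a graph, $t\ge 2$ an integer and $k$ a nonnegative integer. For a set of vertices $X$, let $E_X$ denote the set of all pairs $\{u,v\}$ with $u,v\in X$, $u\neq v$. Let $\mathcal{F}'$ be a family of sets of the form $E_Z$ with $Z\subseteq V(G)$, such that for every edge $\{x,y\}$ of $G$, the family $\mathcal{F}'_{xy}=\{X\subseteq V(G)\setminus\{x,y\} : E_{X\cup\{x,y\}}\in\mathcal{F}'\}$ satisfies $|\mathcal{F}'_{xy}|\le 2\cdot(t-2)!\cdot k^{t-2}$. If $|\mathcal{F}'|>2\cdot(t-2)!\cdot k^{t-1}$, then $\mathcal{F}'$ has no hitting set consisting of at most $k$ edges of $G$.
   Context: A set $S$ is a hitting set of a family $\mathcal{F}$ of sets if $S\cap F\neq\emptyset$ for every $F\in\mathcal{F}$. (In the paper this is phrased as: after exhaustively applying the sunflower reduction rule, so that $|\mathcal{F}'_{xy}|\le 2(t-2)!k^{t-2}$ for every edge, the rule "if $|\mathcal{F}'|>2(t-2)!k^{t-1}$, return a fixed no-instance" is safe.) *)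

theory Defs
  imports Main
begin

definition simple_graph :: "'a set \<Rightarrow> 'a set set \<Rightarrow> bool" where
  "simple_graph V E \<longleftrightarrow> finite V \<and>
     (\<forall>e\<in>E. \<exists>u v. e = {u, v} \<and> u \<noteq> v \<and> u \<in> V \<and> v \<in> V)"

definition pairs_of :: "'a set \<Rightarrow> 'a set set" where
  "pairs_of X = {{u, v} | u v. u \<in> X \<and> v \<in> X \<and> u \<noteq> v}"

definition hitting_set :: "'b set \<Rightarrow> 'b set set \<Rightarrow> bool" where
  "hitting_set S F \<longleftrightarrow> (\<forall>A\<in>F. S \<inter> A \<noteq> {})"

definition link_family :: "'a set \<Rightarrow> 'a set set set \<Rightarrow> 'a \<Rightarrow> 'a \<Rightarrow> 'a set set" where
  "link_family V F x y = {X. X \<subseteq> V - {x, y} \<and> pairs_of (X \<union> {x, y}) \<in> F}"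

end

theory Submission
  imports Defs
begin

text \<open>A member of \<open>F'\<close> containing the edge \<open>{x, y}\<close> is \<open>E\<^sub>Z\<close> with \<open>x, y \<in> Z\<close>, so it is
  determined by \<open>Z - {x, y} \<in> F'\<^sub>x\<^sub>y\<close>. Hence each edge hits at most \<open>2 (t-2)! k^(t-2)\<close>
  members of \<open>F'\<close>, and \<open>k\<close> edges hit at most \<open>2 (t-2)! k^(t-1)\<close> of them.\<close>

lemma pairs_of_memD:
  assumes "{x, y} \<in> pairs_of Z"
  shows "x \<in> Z" "y \<in> Z"
proof -
  obtain u v where "{x, y} = {u, v}" "u \<in> Z" "v \<in> Z"
    using assms unfolding pairs_of_def by blast
  then show "x \<in> Z" "y \<in> Z" by (metis doubleton_eq_iff)+
qed

lemma simple_graph_finite_edges: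
  assumes "simple_graph V E"
  shows "finite E"
proof (rule finite_subset)
  show "E \<subseteq> Pow V"
  proof
    fix e assume "e \<in> E"
    then obtain u v where "e = {u, v}" "u \<in> V" "v \<in> V"
      using assms unfolding simple_graph_def by blast
    then show "e \<in> Pow V" by simp
  qed
  show "finite (Pow V)" using assms unfolding simple_graph_def by simp
qed

lemma card_le_card_hitting_set_mult:
  assumes "finite S" "hitting_set S F"
    and "\<And>e. e \<in> S \<Longrightarrow> card {A \<in> F. e \<in> A} \<le> B"
  shows "card F \<le> card S * B"
proof (cases "finite F")
  case True
  have "F \<subseteq> (\<Union>e\<in>S. {A \<in> F. e \<in> A})"
    using assms(2) unfolding hitting_set_def by blast
  then have "card F \<le> card (\<Union>e\<in>S. {A \<in> F. e \<in> A})"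
    by (intro card_mono) (auto intro: finite_subset[OF _ True])
  also have "\<dots> \<le> (\<Sum>e\<in>S. card {A \<in> F. e \<in> A})" using assms(1) by (rule card_UN_le)
  also have "\<dots> \<le> (\<Sum>e\<in>S. B)" using assms(3) by (rule sum_mono)
  finally show ?thesis by simp
qed simp

lemma members_containing_pair_subset_link_image:
  assumes "\<forall>A\<in>F. \<exists>Z. Z \<subseteq> V \<and> A = pairs_of Z"
  shows "{A \<in> F. {x, y} \<in> A} \<subseteq> (\<lambda>X. pairs_of (X \<union> {x, y})) ` link_family V F x y"
proof
  fix A assume "A \<in> {A \<in> F. {x, y} \<in> A}"
  then have A: "A \<in> F" "{x, y} \<in> A" by auto
  then obtain Z where Z: "Z \<subseteq> V" "A = pairs_of Z" using assms by blast
  then have Z_eq: "Z - {x, y} \<union> {x, y} = Z" using A pairs_of_memD by fastforce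
  have link_mem: "Z - {x, y} \<in> link_family V F x y"
    unfolding link_family_def using Z A Z_eq by auto
  show "A \<in> (\<lambda>X. pairs_of (X \<union> {x, y})) ` link_family V F x y"
    using link_mem by (rule image_eqI[rotated]) (simp only: Z(2) Z_eq)
qed

lemma card_members_containing_pair_le_link:
  assumes "finite V" "\<forall>A\<in>F. \<exists>Z. Z \<subseteq> V \<and> A = pairs_of Z"
  shows "card {A \<in> F. {x, y} \<in> A} \<le> card (link_family V F x y)"
proof -
  have finite_link: "finite (link_family V F x y)"
  proof (rule finite_subset)
    show "link_family V F x y \<subseteq> Pow V" unfolding link_family_def by blast
  qed (use assms(1) in simp)
  have "card {A \<in> F. {x, y} \<in> A} \<le> card ((\<lambda>X. pairs_of (X \<union> {x, y})) ` link_family V F x y)"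
    using finite_link members_containing_pair_subset_link_image[OF assms(2)]
    by (intro card_mono) auto
  also have "\<dots> \<le> card (link_family V F x y)" using finite_link by (rule card_image_le)
  finally show ?thesis .
qed

theorem lemma3:
  fixes V :: "'a set" and E :: "'a set set" and F :: "'a set set set"
    and t k :: nat
  assumes "simple_graph V E"
    and "t \<ge> 2"
    and "\<forall>A\<in>F. \<exists>Z. Z \<subseteq> V \<and> A = pairs_of Z"
    and "\<forall>x y. {x, y} \<in> E \<longrightarrow>
           card (link_family V F x y) \<le> 2 * fact (t - 2) * k ^ (t - 2)"
    and "card F > 2 * fact (t - 2) * k ^ (t - 1)"
  shows "\<not> (\<exists>S. S \<subseteq> E \<and> card S \<le> k \<and> hitting_set S F)"
proof
  assume "\<exists>S. S \<subseteq> E \<and> card S \<le> k \<and> hitting_set S F"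
  then obtain S where S: "S \<subseteq> E" "card S \<le> k" "hitting_set S F" by blast
  define B :: nat where "B = 2 * fact (t - 2) * k ^ (t - 2)"
  have "finite V" using assms(1) unfolding simple_graph_def by blast
  have degree: "card {A \<in> F. e \<in> A} \<le> B" if "e \<in> S" for e
  proof -
    obtain x y where e: "e = {x, y}"
      using assms(1) S(1) \<open>e \<in> S\<close> unfolding simple_graph_def by blast
    then have "card {A \<in> F. e \<in> A} \<le> card (link_family V F x y)"
      using card_members_containing_pair_le_link[OF \<open>finite V\<close> assms(3)] by simp
    also have "\<dots> \<le> B" using assms(4) S(1) \<open>e \<in> S\<close> e unfolding B_def by auto
    finally show ?thesis .
  qed
  have "finite S" using simple_graph_finite_edges[OF assms(1)] S(1) by (rule finite_subset[rotated])
  then have "card F \<le> card S * B" using S(3) degree by (rule card_le_card_hitting_set_mult)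
  also have "\<dots> \<le> k * B" using S(2) by simp
  also have "\<dots> = 2 * fact (t - 2) * k ^ (t - 1)"
  proof -
    have "t - 1 = Suc (t - 2)" using assms(2) by simp
    then show ?thesis unfolding B_def by (simp add: ac_simps)
  qed
  finally show False using assms(5) by simp
qed

end
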